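(* Let $Y_1,\dots,Y_n$ be independent centered random variables with values in $[-1,1]$. Let $\rho:=\sum_{i=1}^n\mathbb E Y_i^2$, $S:=\sum_{i=1}^nY_i$, $\Psi(y_1,\dots,y_n):=\frac12\big(\prod_i(1+y_i)-\prod_i(1-y_i)\big)$, and $R:=\Psi(Y_1,\dots,Y_n)-S$. Then: (a) $\mathbb E R^2\le\sinh(\rho)-\rho$ and $\mathbb E|R|\le\sqrt{\sinh(\rho)-\rho}$; (b) $\mathbb E|S|\ge\rho/\sqrt{1+3\rho}$; (c) the function $D_r(\rho):=\sqrt{(1+3\rho)(\sinh\rho-\rho)/\rho^2}$ for $\rho>0$, $D_r(0):=0$, is increasing on $[0,\infty)$, and \[ (1-D_r(\rho))\,\mathbb E|S|\le\mathbb E|\Psi(Y_1,\dots,Y_n)|\le(1+D_r(\rho))\,\mathbb E|S|. \] *)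

theory Defs
  imports "HOL-Probability.Probability"
begin

definition Psi :: "nat \<Rightarrow> (nat \<Rightarrow> real) \<Rightarrow> real" where
  "Psi n y = ((\<Prod>i<n. 1 + y i) - (\<Prod>i<n. 1 - y i)) / 2"

definition Dr :: "real \<Rightarrow> real" where
  "Dr \<rho> = (if \<rho> = 0 then 0 else sqrt ((1 + 3 * \<rho>) * (sinh \<rho> - \<rho>) / \<rho>\<^sup>2))"

end

theory Submission
  imports Defs
begin

text \<open>
  Let \<open>Psi k\<close> and \<open>Phi k\<close> be the odd and the even part of \<open>\<Prod>i<k. 1 + y i\<close>; then
  \<open>Psi (k + 1) = Psi k + y k * Phi k\<close> and \<open>Phi (k + 1) = Phi k + y k * Psi k\<close>. Since \<open>Y k\<close> is
  centered and independent of \<open>Y 0, \<dots>, Y (k - 1)\<close>, such a step adds \<open>E (Y k)\<^sup>2\<close> times the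
  second moment of the other function, and this is dominated by the addition theorems of \<open>sinh\<close>
  and \<open>cosh\<close>. Induction gives \<open>E Psi\<^sup>2 \<le> sinh \<rho>\<close>, and the same recursion for
  \<open>R = Psi - S\<close> and \<open>Phi - 1\<close> gives \<open>E R\<^sup>2 \<le> sinh \<rho> - \<rho>\<close>.

  The lower bound on \<open>E |S|\<close> interpolates \<open>E S\<^sup>2 = \<rho>\<close> between \<open>E |S|\<close> and
  \<open>E S\<^sup>4 \<le> \<rho> + 3 \<rho>\<^sup>2\<close> by Hoelder's inequality. Finally
  \<open>E |R| \<le> sqrt (sinh \<rho> - \<rho>) = Dr \<rho> * \<rho> / sqrt (1 + 3 \<rho>) \<le> Dr \<rho> * E |S|\<close>, and the
  two-sided bound on \<open>E |Psi|\<close> is the triangle inequality for \<open>Psi = S + R\<close>.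
\<close>

lemma bounded_const_comp: "bounded ((\<lambda>_. c) ` S)"
  by (rule bounded_subset[of "{c}"]) auto

lemma bounded_mult_comp:
  fixes f g :: "'a \<Rightarrow> 'b::real_normed_algebra"
  assumes "bounded (f ` S)" "bounded (g ` S)"
  shows "bounded ((\<lambda>x. f x * g x) ` S)"
proof -
  obtain a b where "\<forall>x\<in>S. norm (f x) \<le> a" "\<forall>x\<in>S. norm (g x) \<le> b"
    using assms by (auto simp: bounded_iff)
  then have "\<forall>x\<in>S. norm (f x * g x) \<le> a * b"
    by (meson norm_ge_zero norm_mult_ineq order_trans mult_mono)
  then show ?thesis by (auto simp: bounded_iff)
qed

lemma bounded_sum_comp:
  fixes f :: "'i \<Rightarrow> 'a \<Rightarrow> 'b::real_normed_vector"
  assumes "\<And>i. i \<in> I \<Longrightarrow> bounded (f i ` S)"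
  shows "bounded ((\<lambda>x. \<Sum>i\<in>I. f i x) ` S)"
  using assms
  by (induction I rule: infinite_finite_induct) (auto intro: bounded_plus_comp bounded_const_comp)

lemma bounded_prod_comp:
  fixes f :: "'i \<Rightarrow> 'a \<Rightarrow> 'b::{real_normed_algebra_1, comm_monoid_mult}"
  assumes "\<And>i. i \<in> I \<Longrightarrow> bounded (f i ` S)"
  shows "bounded ((\<lambda>x. \<Prod>i\<in>I. f i x) ` S)"
  using assms
  by (induction I rule: infinite_finite_induct)
    (auto intro: bounded_mult_comp bounded_const_comp)

lemma bounded_power_comp:
  fixes f :: "'a \<Rightarrow> 'b::{real_normed_algebra_1, comm_monoid_mult}"
  assumes "bounded (f ` S)"
  shows "bounded ((\<lambda>x. f x ^ m) ` S)"
  using bounded_prod_comp[of "{..<m}" "\<lambda>_. f" S] assms by simp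

lemma bounded_divide_comp:
  fixes f :: "'a \<Rightarrow> 'b::real_normed_field"
  assumes "bounded (f ` S)"
  shows "bounded ((\<lambda>x. f x / c) ` S)"
  using bounded_mult_comp[OF assms bounded_const_comp, of "inverse c"]
  by (simp add: divide_inverse)

lemma (in finite_measure) integrable_bounded_image:
  fixes f :: "'a \<Rightarrow> real"
  assumes "f \<in> borel_measurable M" "bounded (f ` space M)"
  shows "integrable M f"
proof -
  obtain B where "\<forall>x\<in>space M. norm (f x) \<le> B"
    using assms(2) by (auto simp: bounded_iff)
  then show ?thesis
    by (intro integrable_const_bound[where B = B] AE_I2) (auto simp: assms(1))
qed

lemma nonneg_quadratic_discriminant:
  fixes a b c :: real
  assumes "0 \<le> b" and nonneg: "\<And>t. 0 \<le> a - 2 * t * c + t\<^sup>2 * b"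
  shows "c\<^sup>2 \<le> a * b"
proof (cases "b = 0")
  case True
  \<comment> \<open>for \<open>c \<noteq> 0\<close> this choice of \<open>t\<close> makes the linear expression equal to \<open>-1\<close>\<close>
  have "0 \<le> a - 2 * ((a + 1) / (2 * c)) * c + ((a + 1) / (2 * c))\<^sup>2 * b"
    by (rule nonneg)
  with True show ?thesis
    by (cases "c = 0") (simp_all add: field_simps)
next
  case False
  with \<open>0 \<le> b\<close> have "0 < b" by simp
  have "0 \<le> a - 2 * (c / b) * c + (c / b)\<^sup>2 * b"
    by (rule nonneg)
  with \<open>0 < b\<close> show ?thesis
    by (simp add: field_simps power2_eq_square)
qed

lemma Cauchy_Schwarz_integral:
  fixes f g :: "'a \<Rightarrow> real"
  assumes [measurable]: "f \<in> borel_measurable M" "g \<in> borel_measurable M"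
    and f2: "integrable M (\<lambda>x. (f x)\<^sup>2)" and g2: "integrable M (\<lambda>x. (g x)\<^sup>2)"
  shows "(\<integral>x. f x * g x \<partial>M)\<^sup>2 \<le> (\<integral>x. (f x)\<^sup>2 \<partial>M) * (\<integral>x. (g x)\<^sup>2 \<partial>M)"
proof (rule nonneg_quadratic_discriminant)
  show "0 \<le> (\<integral>x. (g x)\<^sup>2 \<partial>M)" by simp
  have fg: "integrable M (\<lambda>x. f x * g x)"
  proof (rule Bochner_Integration.integrable_bound[OF Bochner_Integration.integrable_add[OF f2 g2]])
    have "\<bar>f x * g x\<bar> \<le> (f x)\<^sup>2 + (g x)\<^sup>2" for x
    proof -
      have "0 \<le> (\<bar>f x\<bar> - \<bar>g x\<bar>)\<^sup>2" by simp
      then have "2 * \<bar>f x * g x\<bar> \<le> (f x)\<^sup>2 + (g x)\<^sup>2"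
        by (simp add: power2_diff abs_mult)
      then show ?thesis by simp
    qed
    then show "AE x in M. norm (f x * g x) \<le> norm ((f x)\<^sup>2 + (g x)\<^sup>2)"
      by simp
  qed measurable
  fix t :: real
  have "(\<lambda>x. (f x - t * g x)\<^sup>2) = (\<lambda>x. (f x)\<^sup>2 - 2 * t * (f x * g x) + t\<^sup>2 * (g x)\<^sup>2)"
    by (simp add: fun_eq_iff power2_eq_square algebra_simps)
  then have "(\<integral>x. (f x - t * g x)\<^sup>2 \<partial>M)
      = (\<integral>x. (f x)\<^sup>2 \<partial>M) - 2 * t * (\<integral>x. f x * g x \<partial>M) + t\<^sup>2 * (\<integral>x. (g x)\<^sup>2 \<partial>M)"
    using f2 g2 fg by simp
  moreover have "0 \<le> (\<integral>x. (f x - t * g x)\<^sup>2 \<partial>M)" by simp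
  ultimately show "0 \<le> (\<integral>x. (f x)\<^sup>2 \<partial>M) - 2 * t * (\<integral>x. f x * g x \<partial>M) + t\<^sup>2 * (\<integral>x. (g x)\<^sup>2 \<partial>M)"
    by simp
qed

lemma (in prob_space) integral_abs_le_sqrt_integral_square:
  fixes f :: "'a \<Rightarrow> real"
  assumes [measurable]: "f \<in> borel_measurable M" and f2: "integrable M (\<lambda>x. (f x)\<^sup>2)"
  shows "(\<integral>x. \<bar>f x\<bar> \<partial>M) \<le> sqrt (\<integral>x. (f x)\<^sup>2 \<partial>M)"
proof (rule real_le_rsqrt)
  have "integrable M (\<lambda>x. \<bar>f x\<bar>)"
    using square_integrable_imp_integrable[OF _ f2] by simp
  with f2 have "variance (\<lambda>x. \<bar>f x\<bar>) = (\<integral>x. (f x)\<^sup>2 \<partial>M) - (\<integral>x. \<bar>f x\<bar> \<partial>M)\<^sup>2"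
    by (subst variance_eq) simp_all
  with variance_positive[of "\<lambda>x. \<bar>f x\<bar>"]
  show "(\<integral>x. \<bar>f x\<bar> \<partial>M)\<^sup>2 \<le> (\<integral>x. (f x)\<^sup>2 \<partial>M)"
    by simp
qed

lemma (in prob_space) second_moment_cube_le:
  fixes f :: "'a \<Rightarrow> real"
  assumes [measurable]: "f \<in> borel_measurable M" and bounded: "bounded (f ` space M)"
  shows "(\<integral>x. (f x)\<^sup>2 \<partial>M) ^ 3 \<le> (\<integral>x. \<bar>f x\<bar> \<partial>M)\<^sup>2 * (\<integral>x. (f x) ^ 4 \<partial>M)"
proof -
  have "bounded ((\<lambda>x. \<bar>f x\<bar>) ` space M)"
    using bounded bounded_norm_comp[of f] by simp
  then have int: "integrable M (\<lambda>x. \<bar>f x\<bar> ^ p)" for p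
    by (intro integrable_bounded_image bounded_power_comp) simp_all
  define m1 m2 m3 m4 where "m1 = (\<integral>x. \<bar>f x\<bar> \<partial>M)" and "m2 = (\<integral>x. (f x)\<^sup>2 \<partial>M)"
    and "m3 = (\<integral>x. \<bar>f x\<bar> ^ 3 \<partial>M)" and "m4 = (\<integral>x. (f x) ^ 4 \<partial>M)"
  have abs_powers: "(sqrt \<bar>y\<bar>)\<^sup>2 = \<bar>y\<bar>" "(\<bar>y\<bar> * sqrt \<bar>y\<bar>)\<^sup>2 = \<bar>y\<bar> ^ 3"
      "sqrt \<bar>y\<bar> * (\<bar>y\<bar> * sqrt \<bar>y\<bar>) = y\<^sup>2" "\<bar>y\<bar> * y\<^sup>2 = \<bar>y\<bar> ^ 3"
      "\<bar>y\<bar>\<^sup>2 = y\<^sup>2" "(y\<^sup>2)\<^sup>2 = y ^ 4" for y :: real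
  proof -
    show "(\<bar>y\<bar> * sqrt \<bar>y\<bar>)\<^sup>2 = \<bar>y\<bar> ^ 3"
      by (metis abs_ge_zero abs_mult_self_eq power2_eq_square power3_eq_cube power_mult_distrib
          real_sqrt_pow2_iff)
    have "sqrt \<bar>y\<bar> * sqrt \<bar>y\<bar> = \<bar>y\<bar>" by simp
    then show "sqrt \<bar>y\<bar> * (\<bar>y\<bar> * sqrt \<bar>y\<bar>) = y\<^sup>2"
      by (metis abs_mult_self_eq mult.left_commute power2_eq_square)
    show "\<bar>y\<bar> * y\<^sup>2 = \<bar>y\<bar> ^ 3"
      by (metis abs_mult_self_eq mult.assoc power2_eq_square power3_eq_cube)
  qed simp_all
  have m2_m1_m3: "m2\<^sup>2 \<le> m1 * m3"
    using Cauchy_Schwarz_integral[of "\<lambda>x. sqrt \<bar>f x\<bar>" M "\<lambda>x. \<bar>f x\<bar> * sqrt \<bar>f x\<bar>"]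
      int[of 1] int[of 3]
    unfolding abs_powers by (simp add: m1_def m2_def m3_def)
  have "(\<integral>x. \<bar>f x\<bar> * (f x)\<^sup>2 \<partial>M)\<^sup>2 \<le> (\<integral>x. \<bar>f x\<bar>\<^sup>2 \<partial>M) * (\<integral>x. ((f x)\<^sup>2)\<^sup>2 \<partial>M)"
    using int[of 2] int[of 4] by (intro Cauchy_Schwarz_integral) simp_all
  then have m3_m2_m4: "m3\<^sup>2 \<le> m2 * m4"
    unfolding abs_powers m2_def m3_def m4_def .
  have "0 \<le> m2" "0 \<le> m4"
    by (simp_all add: m2_def m4_def)
  have "m2 * m2 ^ 3 = (m2\<^sup>2)\<^sup>2"
    by (simp add: power2_eq_square power3_eq_cube)
  also have "\<dots> \<le> (m1 * m3)\<^sup>2"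
    using m2_m1_m3 by (intro power_mono) simp_all
  also have "\<dots> = m1\<^sup>2 * m3\<^sup>2"
    by (simp add: power_mult_distrib)
  also have "\<dots> \<le> m1\<^sup>2 * (m2 * m4)"
    using m3_m2_m4 by (intro mult_left_mono) simp_all
  finally have "m2 * m2 ^ 3 \<le> m2 * (m1\<^sup>2 * m4)"
    by (simp add: algebra_simps)
  with \<open>0 \<le> m2\<close> \<open>0 \<le> m4\<close> have "m2 ^ 3 \<le> m1\<^sup>2 * m4"
    by (cases "m2 = 0") simp_all
  then show ?thesis
    by (simp add: m1_def m2_def m4_def)
qed

lemma integral_abs_le_add_integral_abs_diff:
  fixes f g :: "'a \<Rightarrow> real"
  assumes "integrable M f" "integrable M g"
  shows "(\<integral>x. \<bar>f x\<bar> \<partial>M) \<le> (\<integral>x. \<bar>g x\<bar> \<partial>M) + (\<integral>x. \<bar>f x - g x\<bar> \<partial>M)"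
proof -
  have "(\<integral>x. \<bar>f x\<bar> \<partial>M) \<le> (\<integral>x. \<bar>g x\<bar> + \<bar>f x - g x\<bar> \<partial>M)"
    using assms by (intro integral_mono) auto
  also have "\<dots> = (\<integral>x. \<bar>g x\<bar> \<partial>M) + (\<integral>x. \<bar>f x - g x\<bar> \<partial>M)"
    using assms by (intro Bochner_Integration.integral_add) auto
  finally show ?thesis .
qed

lemma (in prob_space) indep_var_integral_mult_comp:
  fixes X Z :: "'a \<Rightarrow> 'b" and u v :: "'b \<Rightarrow> real"
  assumes "indep_var N X N' Z" "u \<in> borel_measurable N" "v \<in> borel_measurable N'"
    and "integrable M (\<lambda>\<omega>. u (X \<omega>))" "integrable M (\<lambda>\<omega>. v (Z \<omega>))"
  shows "(\<integral>\<omega>. u (X \<omega>) * v (Z \<omega>) \<partial>M) = (\<integral>\<omega>. u (X \<omega>) \<partial>M) * (\<integral>\<omega>. v (Z \<omega>) \<partial>M)"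
  using indep_var_lebesgue_integral[OF indep_var_compose[OF assms(1-3), unfolded comp_def]]
    assms(4,5) .

lemma (in prob_space) integral_square_indep_step:
  fixes X W :: "'a \<Rightarrow> 'b" and f g h :: "'b \<Rightarrow> real"
  assumes indep: "indep_var N X N' W"
    and [measurable]: "f \<in> borel_measurable N" "g \<in> borel_measurable N" "h \<in> borel_measurable N'"
    and bounded: "bounded ((\<lambda>\<omega>. f (X \<omega>)) ` space M)" "bounded ((\<lambda>\<omega>. g (X \<omega>)) ` space M)"
      "bounded ((\<lambda>\<omega>. h (W \<omega>)) ` space M)"
    and centered: "(\<integral>\<omega>. h (W \<omega>) \<partial>M) = 0"
  shows "(\<integral>\<omega>. (f (X \<omega>) + h (W \<omega>) * g (X \<omega>))\<^sup>2 \<partial>M)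
    = (\<integral>\<omega>. (f (X \<omega>))\<^sup>2 \<partial>M) + (\<integral>\<omega>. (h (W \<omega>))\<^sup>2 \<partial>M) * (\<integral>\<omega>. (g (X \<omega>))\<^sup>2 \<partial>M)"
proof -
  have [measurable]: "X \<in> measurable M N" "W \<in> measurable M N'"
    using indep_var_rv1[OF indep] indep_var_rv2[OF indep] by simp_all
  have int: "integrable M u"
    if "u \<in> borel_measurable M" "bounded (u ` space M)" for u :: "'a \<Rightarrow> real"
    using that by (rule integrable_bounded_image)
  have cross: "(\<integral>\<omega>. 2 * f (X \<omega>) * g (X \<omega>) * h (W \<omega>) \<partial>M) = 0"
    using bounded centered
    by (subst indep_var_integral_mult_comp[OF indep, of "\<lambda>b. 2 * f b * g b" h])
      (auto intro!: int bounded_mult_comp bounded_const_comp)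
  have square: "(\<integral>\<omega>. (g (X \<omega>))\<^sup>2 * (h (W \<omega>))\<^sup>2 \<partial>M)
      = (\<integral>\<omega>. (g (X \<omega>))\<^sup>2 \<partial>M) * (\<integral>\<omega>. (h (W \<omega>))\<^sup>2 \<partial>M)"
    using bounded
    by (intro indep_var_integral_mult_comp[OF indep] int bounded_power_comp) simp_all
  have "(\<lambda>\<omega>. (f (X \<omega>) + h (W \<omega>) * g (X \<omega>))\<^sup>2) = (\<lambda>\<omega>. (f (X \<omega>))\<^sup>2
      + 2 * f (X \<omega>) * g (X \<omega>) * h (W \<omega>) + (g (X \<omega>))\<^sup>2 * (h (W \<omega>))\<^sup>2)"
    by (simp add: fun_eq_iff power2_eq_square algebra_simps)
  moreover have "integrable M (\<lambda>\<omega>. (f (X \<omega>))\<^sup>2)"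
      "integrable M (\<lambda>\<omega>. 2 * f (X \<omega>) * g (X \<omega>) * h (W \<omega>))"
      "integrable M (\<lambda>\<omega>. (g (X \<omega>))\<^sup>2 * (h (W \<omega>))\<^sup>2)"
    using bounded by (auto intro!: int bounded_mult_comp bounded_power_comp bounded_const_comp)
  ultimately show ?thesis
    using cross square by simp
qed

lemma (in prob_space) integral_fourth_power_indep_add:
  fixes A Z :: "'a \<Rightarrow> real"
  assumes indep: "indep_var borel A borel Z"
    and bounded: "bounded (A ` space M)" "bounded (Z ` space M)"
    and centered: "expectation A = 0" "expectation Z = 0"
  shows "(\<integral>\<omega>. (A \<omega> + Z \<omega>) ^ 4 \<partial>M)
    = (\<integral>\<omega>. (A \<omega>) ^ 4 \<partial>M) + 6 * (\<integral>\<omega>. (A \<omega>)\<^sup>2 \<partial>M) * (\<integral>\<omega>. (Z \<omega>)\<^sup>2 \<partial>M)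
      + (\<integral>\<omega>. (Z \<omega>) ^ 4 \<partial>M)"
proof -
  have [measurable]: "A \<in> borel_measurable M" "Z \<in> borel_measurable M"
    using indep_var_rv1[OF indep] indep_var_rv2[OF indep] by simp_all
  define F where "F p q \<omega> = (A \<omega>) ^ p * (Z \<omega>) ^ q" for p q :: nat and \<omega>
  have int: "integrable M (F p q)" for p q
    unfolding F_def using bounded
    by (intro integrable_bounded_image bounded_mult_comp bounded_power_comp) simp_all
  have mult: "integral\<^sup>L M (F p q) = (\<integral>\<omega>. (A \<omega>) ^ p \<partial>M) * (\<integral>\<omega>. (Z \<omega>) ^ q \<partial>M)" for p q
    unfolding F_def using bounded
    by (intro indep_var_integral_mult_comp[OF indep] integrable_bounded_image bounded_power_comp)
      simp_all
  have "(\<lambda>\<omega>. (A \<omega> + Z \<omega>) ^ 4)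
      = (\<lambda>\<omega>. F 4 0 \<omega> + 4 * F 3 1 \<omega> + 6 * F 2 2 \<omega> + 4 * F 1 3 \<omega> + F 0 4 \<omega>)"
    unfolding F_def by (simp add: fun_eq_iff eval_nat_numeral algebra_simps)
  then have "(\<integral>\<omega>. (A \<omega> + Z \<omega>) ^ 4 \<partial>M) = integral\<^sup>L M (F 4 0) + 4 * integral\<^sup>L M (F 3 1)
      + 6 * integral\<^sup>L M (F 2 2) + 4 * integral\<^sup>L M (F 1 3) + integral\<^sup>L M (F 0 4)"
    using int by simp
  then show ?thesis
    unfolding mult using centered by (simp add: prob_space)
qed

lemma x_le_sinh_real: "0 \<le> x \<Longrightarrow> x \<le> sinh (x :: real)"
  using real_le_x_sinh[of x] by (simp add: sinh_field_def exp_minus)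

lemma sinh_add_ge:
  fixes a s :: real
  assumes "0 \<le> a" "0 \<le> s"
  shows "sinh a + s * cosh a \<le> sinh (a + s)"
proof -
  have "sinh a \<le> sinh a * cosh s"
    using assms mult_left_mono[OF cosh_real_ge_1, of "sinh a" s] by simp
  moreover have "s * cosh a \<le> cosh a * sinh s"
    using assms mult_left_mono[OF x_le_sinh_real, of s "cosh a"] by (simp add: mult.commute)
  ultimately show ?thesis
    unfolding sinh_add by linarith
qed

lemma cosh_add_ge:
  fixes a s :: real
  assumes "0 \<le> a" "0 \<le> s"
  shows "cosh a + s * sinh a \<le> cosh (a + s)"
proof -
  have "cosh a \<le> cosh a * cosh s"
    using mult_left_mono[OF cosh_real_ge_1, of "cosh a" s] by simp
  moreover have "s * sinh a \<le> sinh a * sinh s"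
    using assms mult_left_mono[OF x_le_sinh_real, of s "sinh a"] by (simp add: mult.commute)
  ultimately show ?thesis
    unfolding cosh_add by linarith
qed

lemma cosh_le_x_sinh_plus_1:
  assumes "0 \<le> (x :: real)"
  shows "cosh x \<le> x * sinh x + 1"
proof -
  have "(\<lambda>x. x * sinh x + 1 - cosh x) 0 \<le> (\<lambda>x. x * sinh x + 1 - cosh x) x"
  proof (rule DERIV_nonneg_imp_increasing_open[OF assms])
    fix t :: real assume "0 < t" "t < x"
    then show "\<exists>y. ((\<lambda>x. x * sinh x + 1 - cosh x) has_real_derivative y) (at t) \<and> 0 \<le> y"
      by (intro exI[of _ "t * cosh t"]) (auto intro!: derivative_eq_intros)
  qed (intro continuous_intros)
  then show ?thesis by simp
qed

lemma two_sinh_le_x_cosh_plus_x: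
  assumes "0 \<le> (x :: real)"
  shows "2 * sinh x \<le> x * cosh x + x"
proof -
  have "(\<lambda>x. x * cosh x + x - 2 * sinh x) 0 \<le> (\<lambda>x. x * cosh x + x - 2 * sinh x) x"
  proof (rule DERIV_nonneg_imp_increasing_open[OF assms])
    fix t :: real assume "0 < t" "t < x"
    then show "\<exists>y. ((\<lambda>x. x * cosh x + x - 2 * sinh x) has_real_derivative y) (at t) \<and> 0 \<le> y"
      using cosh_le_x_sinh_plus_1[of t]
      by (intro exI[of _ "t * sinh t + 1 - cosh t"]) (auto intro!: derivative_eq_intros)
  qed (intro continuous_intros)
  then show ?thesis by simp
qed

lemma mono_on_sinh_minus_id_over_square: "mono_on {0<..} (\<lambda>x::real. (sinh x - x) / x\<^sup>2)"
proof (rule mono_onI)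
  fix a b :: real
  assume "a \<in> {0<..}" "b \<in> {0<..}" "a \<le> b"
  have "(\<lambda>x. (sinh x - x) / x\<^sup>2) a \<le> (\<lambda>x. (sinh x - x) / x\<^sup>2) b"
  proof (rule DERIV_nonneg_imp_increasing_open[OF \<open>a \<le> b\<close>])
    fix t :: real assume "a < t" "t < b"
    with \<open>a \<in> {0<..}\<close> have "0 < t" by simp
    have "((\<lambda>x. (sinh x - x) / x\<^sup>2) has_real_derivative (t * cosh t + t - 2 * sinh t) / t ^ 3)
        (at t)"
      using \<open>0 < t\<close>
      by (auto intro!: derivative_eq_intros simp: field_simps power2_eq_square power3_eq_cube)
    then show "\<exists>y. ((\<lambda>x. (sinh x - x) / x\<^sup>2) has_real_derivative y) (at t) \<and> 0 \<le> y"
      using \<open>0 < t\<close> two_sinh_le_x_cosh_plus_x[of t] by (intro exI) auto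
  next
    show "continuous_on {a..b} (\<lambda>x. (sinh x - x) / x\<^sup>2)"
      using \<open>a \<in> {0<..}\<close> by (intro continuous_intros) auto
  qed
  then show "(sinh a - a) / a\<^sup>2 \<le> (sinh b - b) / b\<^sup>2" by simp
qed

lemma mono_on_Dr: "mono_on {0..} Dr"
proof (rule mono_onI)
  fix r s :: real
  assume "r \<in> {0..}" "s \<in> {0..}" "r \<le> s"
  show "Dr r \<le> Dr s"
  proof (cases "r = 0")
    case True
    with \<open>s \<in> {0..}\<close> show ?thesis
      using x_le_sinh_real[of s] by (auto simp: Dr_def)
  next
    case False
    with \<open>r \<in> {0..}\<close> \<open>r \<le> s\<close> have "0 < r" "0 < s" by auto
    have "(1 + 3 * r) * ((sinh r - r) / r\<^sup>2) \<le> (1 + 3 * s) * ((sinh s - s) / s\<^sup>2)"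
      using \<open>0 < r\<close> \<open>0 < s\<close> \<open>r \<le> s\<close> x_le_sinh_real[of r]
        mono_onD[OF mono_on_sinh_minus_id_over_square, of r s]
      by (intro mult_mono) auto
    with \<open>0 < r\<close> \<open>0 < s\<close> show ?thesis
      by (simp add: Dr_def)
  qed
qed

lemma Dr_nonneg: "0 \<le> \<rho> \<Longrightarrow> 0 \<le> Dr \<rho>"
  using x_le_sinh_real[of \<rho>] by (simp add: Dr_def)

lemma Dr_mult_eq:
  assumes "0 < \<rho>"
  shows "Dr \<rho> * (\<rho> / sqrt (1 + 3 * \<rho>)) = sqrt (sinh \<rho> - \<rho>)"
proof -
  have "Dr \<rho> * (\<rho> / sqrt (1 + 3 * \<rho>))
      = sqrt ((1 + 3 * \<rho>) * (sinh \<rho> - \<rho>) / \<rho>\<^sup>2 * (\<rho>\<^sup>2 / (1 + 3 * \<rho>)))"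
    using assms by (simp add: Dr_def real_sqrt_divide real_sqrt_mult)
  also have "\<dots> = sqrt (sinh \<rho> - \<rho>)"
  proof -
    have "1 + 3 * \<rho> \<noteq> 0" "\<rho>\<^sup>2 \<noteq> 0"
      using assms by auto
    then show ?thesis by (simp add: divide_simps)
  qed
  finally show ?thesis .
qed

definition Phi :: "nat \<Rightarrow> (nat \<Rightarrow> real) \<Rightarrow> real" where
  "Phi n y = ((\<Prod>i<n. 1 + y i) + (\<Prod>i<n. 1 - y i)) / 2"

lemma Psi_0 [simp]: "Psi 0 y = 0"
  by (simp add: Psi_def)

lemma Phi_0 [simp]: "Phi 0 y = 1"
  by (simp add: Phi_def)

lemma Psi_Suc: "Psi (Suc k) y = Psi k y + y k * Phi k y"
  by (simp add: Psi_def Phi_def field_simps)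

lemma Phi_Suc: "Phi (Suc k) y = Phi k y + y k * Psi k y"
  by (simp add: Psi_def Phi_def field_simps)

lemma Psi_restrict [simp]: "Psi k (restrict y {..<k}) = Psi k y"
  by (simp add: Psi_def)

lemma Phi_restrict [simp]: "Phi k (restrict y {..<k}) = Phi k y"
  by (simp add: Phi_def)

lemma measurable_Psi [measurable]: "Psi k \<in> borel_measurable (Pi\<^sub>M {..<k} (\<lambda>_. borel))"
  unfolding Psi_def by measurable

lemma measurable_Phi [measurable]: "Phi k \<in> borel_measurable (Pi\<^sub>M {..<k} (\<lambda>_. borel))"
  unfolding Phi_def by measurable

lemma bounded_Psi_comp:
  "(\<And>i. i < k \<Longrightarrow> bounded (y i ` S)) \<Longrightarrow> bounded ((\<lambda>x. Psi k (\<lambda>i. y i x)) ` S)"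
  unfolding Psi_def
  by (intro bounded_divide_comp bounded_minus_comp bounded_prod_comp bounded_plus_comp
      bounded_const_comp) simp_all

lemma bounded_Phi_comp:
  "(\<And>i. i < k \<Longrightarrow> bounded (y i ` S)) \<Longrightarrow> bounded ((\<lambda>x. Phi k (\<lambda>i. y i x)) ` S)"
  unfolding Phi_def
  by (intro bounded_divide_comp bounded_minus_comp bounded_prod_comp bounded_plus_comp
      bounded_const_comp) simp_all

locale centered_unit_indep = prob_space M for M :: "'a measure" +
  fixes Y :: "nat \<Rightarrow> 'a \<Rightarrow> real" and n :: nat
  assumes indep: "indep_vars (\<lambda>_. borel) Y {..<n}"
    and abs_Y_le_1: "\<And>i x. i < n \<Longrightarrow> x \<in> space M \<Longrightarrow> \<bar>Y i x\<bar> \<le> 1"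
    and expectation_Y: "\<And>i. i < n \<Longrightarrow> expectation (Y i) = 0"
begin

definition rho :: "nat \<Rightarrow> real" where
  "rho k = (\<Sum>i<k. \<integral>x. (Y i x)\<^sup>2 \<partial>M)"

lemma rho_Suc: "rho (Suc k) = rho k + (\<integral>x. (Y k x)\<^sup>2 \<partial>M)"
  by (simp add: rho_def)

lemma rho_nonneg: "0 \<le> rho k"
  by (simp add: rho_def sum_nonneg)

lemma measurable_Y: "i < n \<Longrightarrow> Y i \<in> borel_measurable M"
  using indep by (auto simp: indep_vars_def)

lemma bounded_Y: "i < n \<Longrightarrow> bounded (Y i ` space M)"
  using abs_Y_le_1 by (auto simp: bounded_iff)

lemma bounded_sum_Y: "k \<le> n \<Longrightarrow> bounded ((\<lambda>x. \<Sum>i<k. Y i x) ` space M)"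
  by (intro bounded_sum_comp bounded_Y) auto

lemma bounded_Psi_Y: "k \<le> n \<Longrightarrow> bounded ((\<lambda>x. Psi k (\<lambda>i. Y i x)) ` space M)"
  by (intro bounded_Psi_comp bounded_Y) auto

lemma bounded_Phi_Y: "k \<le> n \<Longrightarrow> bounded ((\<lambda>x. Phi k (\<lambda>i. Y i x)) ` space M)"
  by (intro bounded_Phi_comp bounded_Y) auto

lemma indep_prefix:
  "k < n \<Longrightarrow> indep_var (Pi\<^sub>M {..<k} (\<lambda>_. borel)) (\<lambda>x. restrict (\<lambda>i. Y i x) {..<k})
    (Pi\<^sub>M {k} (\<lambda>_. borel)) (\<lambda>x. restrict (\<lambda>i. Y i x) {k})"
  by (rule indep_var_restrict[OF indep]) auto

text \<open>The hypotheses on \<open>restrict\<close> say that \<open>f\<close> and \<open>g\<close> only depend on the coordinates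
  \<open>0, \<dots>, k - 1\<close>.\<close>
lemma integral_square_step:
  assumes "k < n"
    and [measurable]: "f \<in> borel_measurable (Pi\<^sub>M {..<k} (\<lambda>_. borel))"
      "g \<in> borel_measurable (Pi\<^sub>M {..<k} (\<lambda>_. borel))"
    and restrict: "\<And>y. f (restrict y {..<k}) = f y" "\<And>y. g (restrict y {..<k}) = g y"
    and bounded: "bounded ((\<lambda>x. f (\<lambda>i. Y i x)) ` space M)"
      "bounded ((\<lambda>x. g (\<lambda>i. Y i x)) ` space M)"
  shows "(\<integral>x. (f (\<lambda>i. Y i x) + Y k x * g (\<lambda>i. Y i x))\<^sup>2 \<partial>M)
    = (\<integral>x. (f (\<lambda>i. Y i x))\<^sup>2 \<partial>M) + (\<integral>x. (Y k x)\<^sup>2 \<partial>M) * (\<integral>x. (g (\<lambda>i. Y i x))\<^sup>2 \<partial>M)"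
  using integral_square_indep_step[OF indep_prefix[OF \<open>k < n\<close>], of f g "\<lambda>y. y k"]
    bounded bounded_Y[OF \<open>k < n\<close>] expectation_Y[OF \<open>k < n\<close>]
  by (simp add: restrict)

lemma second_moment_Psi_Phi:
  "k \<le> n \<Longrightarrow> (\<integral>x. (Psi k (\<lambda>i. Y i x))\<^sup>2 \<partial>M) \<le> sinh (rho k)
    \<and> (\<integral>x. (Phi k (\<lambda>i. Y i x))\<^sup>2 \<partial>M) \<le> cosh (rho k)"
proof (induction k)
  case 0
  then show ?case by (simp add: rho_def prob_space)
next
  case (Suc k)
  then have "k < n" by simp
  note IH = Suc.IH[OF less_imp_le[OF \<open>k < n\<close>]]
  note step = integral_square_step[OF \<open>k < n\<close>]
  define \<sigma> where "\<sigma> = (\<integral>x. (Y k x)\<^sup>2 \<partial>M)"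
  have "0 \<le> \<sigma>" by (simp add: \<sigma>_def)
  have "(\<integral>x. (Psi (Suc k) (\<lambda>i. Y i x))\<^sup>2 \<partial>M)
      = (\<integral>x. (Psi k (\<lambda>i. Y i x))\<^sup>2 \<partial>M) + \<sigma> * (\<integral>x. (Phi k (\<lambda>i. Y i x))\<^sup>2 \<partial>M)"
    unfolding Psi_Suc \<sigma>_def using \<open>k < n\<close>
    by (intro step bounded_Psi_Y bounded_Phi_Y Psi_restrict Phi_restrict) simp_all
  also have "\<dots> \<le> sinh (rho k) + \<sigma> * cosh (rho k)"
    using IH \<open>0 \<le> \<sigma>\<close> by (intro add_mono mult_left_mono) auto
  also have "\<dots> \<le> sinh (rho (Suc k))"
    unfolding rho_Suc \<sigma>_def[symmetric] using rho_nonneg \<open>0 \<le> \<sigma>\<close> by (rule sinh_add_ge)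
  finally have Psi: "(\<integral>x. (Psi (Suc k) (\<lambda>i. Y i x))\<^sup>2 \<partial>M) \<le> sinh (rho (Suc k))" .
  have "(\<integral>x. (Phi (Suc k) (\<lambda>i. Y i x))\<^sup>2 \<partial>M)
      = (\<integral>x. (Phi k (\<lambda>i. Y i x))\<^sup>2 \<partial>M) + \<sigma> * (\<integral>x. (Psi k (\<lambda>i. Y i x))\<^sup>2 \<partial>M)"
    unfolding Phi_Suc \<sigma>_def using \<open>k < n\<close>
    by (intro step bounded_Psi_Y bounded_Phi_Y Psi_restrict Phi_restrict) simp_all
  also have "\<dots> \<le> cosh (rho k) + \<sigma> * sinh (rho k)"
    using IH \<open>0 \<le> \<sigma>\<close> by (intro add_mono mult_left_mono) auto
  also have "\<dots> \<le> cosh (rho (Suc k))"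
    unfolding rho_Suc \<sigma>_def[symmetric] using rho_nonneg \<open>0 \<le> \<sigma>\<close> by (rule cosh_add_ge)
  finally show ?case
    using Psi by simp
qed

lemma second_moment_Phi_minus_1:
  "k \<le> n \<Longrightarrow> (\<integral>x. (Phi k (\<lambda>i. Y i x) - 1)\<^sup>2 \<partial>M) \<le> cosh (rho k) - 1"
proof (induction k)
  case 0
  then show ?case by (simp add: rho_def)
next
  case (Suc k)
  then have "k < n" by simp
  define \<sigma> where "\<sigma> = (\<integral>x. (Y k x)\<^sup>2 \<partial>M)"
  have "0 \<le> \<sigma>" by (simp add: \<sigma>_def)
  have "(\<integral>x. (Phi (Suc k) (\<lambda>i. Y i x) - 1)\<^sup>2 \<partial>M)
      = (\<integral>x. (Phi k (\<lambda>i. Y i x) - 1)\<^sup>2 \<partial>M) + \<sigma> * (\<integral>x. (Psi k (\<lambda>i. Y i x))\<^sup>2 \<partial>M)"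
    using integral_square_step[OF \<open>k < n\<close>, of "\<lambda>y. Phi k y - 1" "Psi k"] \<open>k < n\<close>
    by (simp add: Phi_Suc \<sigma>_def algebra_simps bounded_Psi_Y bounded_minus_comp bounded_Phi_Y
        bounded_const_comp)
  also have "\<dots> \<le> (cosh (rho k) - 1) + \<sigma> * sinh (rho k)"
    using Suc.IH second_moment_Psi_Phi \<open>k < n\<close> \<open>0 \<le> \<sigma>\<close>
    by (intro add_mono mult_left_mono) auto
  also have "\<dots> \<le> cosh (rho (Suc k)) - 1"
    using cosh_add_ge[OF rho_nonneg \<open>0 \<le> \<sigma>\<close>] by (simp add: rho_Suc \<sigma>_def)
  finally show ?case .
qed

lemma second_moment_remainder:
  "k \<le> n \<Longrightarrow> (\<integral>x. (Psi k (\<lambda>i. Y i x) - (\<Sum>i<k. Y i x))\<^sup>2 \<partial>M) \<le> sinh (rho k) - rho k"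
proof (induction k)
  case 0
  then show ?case by (simp add: rho_def)
next
  case (Suc k)
  then have "k < n" by simp
  define \<sigma> where "\<sigma> = (\<integral>x. (Y k x)\<^sup>2 \<partial>M)"
  have "0 \<le> \<sigma>" by (simp add: \<sigma>_def)
  have "(\<integral>x. (Psi (Suc k) (\<lambda>i. Y i x) - (\<Sum>i<Suc k. Y i x))\<^sup>2 \<partial>M)
      = (\<integral>x. (Psi k (\<lambda>i. Y i x) - (\<Sum>i<k. Y i x))\<^sup>2 \<partial>M)
        + \<sigma> * (\<integral>x. (Phi k (\<lambda>i. Y i x) - 1)\<^sup>2 \<partial>M)"
    using integral_square_step[OF \<open>k < n\<close>, of "\<lambda>y. Psi k y - (\<Sum>i<k. y i)" "\<lambda>y. Phi k y - 1"]
      \<open>k < n\<close>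
    by (simp add: Psi_Suc \<sigma>_def algebra_simps bounded_Psi_Y bounded_sum_Y bounded_minus_comp
        bounded_Phi_Y bounded_const_comp)
  also have "\<dots> \<le> (sinh (rho k) - rho k) + \<sigma> * (cosh (rho k) - 1)"
    using Suc.IH second_moment_Phi_minus_1 \<open>k < n\<close> \<open>0 \<le> \<sigma>\<close>
    by (intro add_mono mult_left_mono) auto
  also have "\<dots> \<le> sinh (rho (Suc k)) - rho (Suc k)"
    using sinh_add_ge[OF rho_nonneg \<open>0 \<le> \<sigma>\<close>] by (simp add: rho_Suc \<sigma>_def algebra_simps)
  finally show ?case .
qed

lemma second_moment_sum:
  "k \<le> n \<Longrightarrow> (\<integral>x. (\<Sum>i<k. Y i x)\<^sup>2 \<partial>M) = rho k"
proof (induction k)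
  case 0
  then show ?case by (simp add: rho_def)
next
  case (Suc k)
  then have "k < n" by simp
  then show ?case
    using integral_square_step[OF \<open>k < n\<close>, of "\<lambda>y. \<Sum>i<k. y i" "\<lambda>_. 1"] Suc.IH
    by (simp add: rho_Suc bounded_sum_Y bounded_const_comp prob_space)
qed

lemma expectation_sum: "k \<le> n \<Longrightarrow> (\<integral>x. (\<Sum>i<k. Y i x) \<partial>M) = 0"
  using expectation_Y measurable_Y bounded_Y
  by (subst Bochner_Integration.integral_sum) (auto intro: integrable_bounded_image)

lemma fourth_moment_sum:
  "k \<le> n \<Longrightarrow> (\<integral>x. (\<Sum>i<k. Y i x) ^ 4 \<partial>M) \<le> rho k + 3 * (rho k)\<^sup>2"
proof (induction k)
  case 0
  then show ?case by (simp add: rho_def)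
next
  case (Suc k)
  then have "k < n" by simp
  define \<sigma> where "\<sigma> = (\<integral>x. (Y k x)\<^sup>2 \<partial>M)"
  have "0 \<le> \<sigma>" by (simp add: \<sigma>_def)
  have "indep_var borel ((\<lambda>y. \<Sum>i<k. y i) \<circ> (\<lambda>x. restrict (\<lambda>i. Y i x) {..<k}))
      borel ((\<lambda>y. y k) \<circ> (\<lambda>x. restrict (\<lambda>i. Y i x) {k}))"
    by (rule indep_var_compose[OF indep_prefix[OF \<open>k < n\<close>]]) simp_all
  then have indep_sum: "indep_var borel (\<lambda>x. \<Sum>i<k. Y i x) borel (Y k)"
    by (simp add: comp_def)
  have Y4: "(\<integral>x. (Y k x) ^ 4 \<partial>M) \<le> \<sigma>"
    unfolding \<sigma>_def
  proof (rule integral_mono)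
    show "integrable M (\<lambda>x. (Y k x) ^ 4)" "integrable M (\<lambda>x. (Y k x)\<^sup>2)"
      using measurable_Y[OF \<open>k < n\<close>] bounded_Y[OF \<open>k < n\<close>]
      by (auto intro!: integrable_bounded_image bounded_power_comp)
    fix x assume "x \<in> space M"
    with abs_Y_le_1[OF \<open>k < n\<close>] have "(Y k x)\<^sup>2 \<le> 1"
      by (simp add: abs_square_le_1)
    then show "(Y k x) ^ 4 \<le> (Y k x)\<^sup>2"
      using mult_left_mono[of "(Y k x)\<^sup>2" 1 "(Y k x)\<^sup>2"]
      by (simp add: power2_eq_square power4_eq_xxxx mult.assoc)
  qed
  have "(\<integral>x. (\<Sum>i<Suc k. Y i x) ^ 4 \<partial>M)
      = (\<integral>x. (\<Sum>i<k. Y i x) ^ 4 \<partial>M) + 6 * rho k * \<sigma> + (\<integral>x. (Y k x) ^ 4 \<partial>M)"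
    using integral_fourth_power_indep_add[OF indep_sum] bounded_sum_Y bounded_Y expectation_sum
      expectation_Y second_moment_sum \<open>k < n\<close>
    by (simp add: \<sigma>_def)
  also have "\<dots> \<le> (rho k + 3 * (rho k)\<^sup>2) + 6 * rho k * \<sigma> + \<sigma>"
    using Suc.IH \<open>k < n\<close> Y4 by simp
  also have "\<dots> \<le> rho (Suc k) + 3 * (rho (Suc k))\<^sup>2"
    unfolding rho_Suc \<sigma>_def[symmetric] by (simp add: power2_eq_square algebra_simps)
  finally show ?case .
qed

lemma measurable_sum_Y: "(\<lambda>x. \<Sum>i<n. Y i x) \<in> borel_measurable M"
  using measurable_Y by measurable

lemma measurable_Psi_Y: "(\<lambda>x. Psi n (\<lambda>i. Y i x)) \<in> borel_measurable M"
  unfolding Psi_def using measurable_Y by measurable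

lemma abs_moment_remainder:
  "(\<integral>x. \<bar>Psi n (\<lambda>i. Y i x) - (\<Sum>i<n. Y i x)\<bar> \<partial>M) \<le> sqrt (sinh (rho n) - rho n)"
proof -
  have "(\<integral>x. \<bar>Psi n (\<lambda>i. Y i x) - (\<Sum>i<n. Y i x)\<bar> \<partial>M)
      \<le> sqrt (\<integral>x. (Psi n (\<lambda>i. Y i x) - (\<Sum>i<n. Y i x))\<^sup>2 \<partial>M)"
    using measurable_Psi_Y measurable_sum_Y bounded_Psi_Y bounded_sum_Y
    by (intro integral_abs_le_sqrt_integral_square integrable_bounded_image bounded_power_comp
        bounded_minus_comp) auto
  also have "\<dots> \<le> sqrt (sinh (rho n) - rho n)"
    using second_moment_remainder by simp
  finally show ?thesis .
qed

lemma abs_moment_sum_lower_bound: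
  "rho n / sqrt (1 + 3 * rho n) \<le> (\<integral>x. \<bar>\<Sum>i<n. Y i x\<bar> \<partial>M)"
proof (cases "rho n = 0")
  case False
  with rho_nonneg have "0 < rho n"
    by (simp add: order_less_le)
  define m1 where "m1 = (\<integral>x. \<bar>\<Sum>i<n. Y i x\<bar> \<partial>M)"
  have "0 \<le> m1" by (simp add: m1_def)
  have "rho n * (rho n)\<^sup>2 = rho n ^ 3"
    by (simp add: power2_eq_square power3_eq_cube)
  also have "\<dots> \<le> m1\<^sup>2 * (\<integral>x. (\<Sum>i<n. Y i x) ^ 4 \<partial>M)"
    using second_moment_cube_le[OF measurable_sum_Y bounded_sum_Y[OF order.refl]]
    unfolding m1_def second_moment_sum[OF order.refl] .
  also have "\<dots> \<le> m1\<^sup>2 * (rho n + 3 * (rho n)\<^sup>2)"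
    using fourth_moment_sum by (intro mult_left_mono) simp_all
  also have "\<dots> = rho n * (m1\<^sup>2 * (1 + 3 * rho n))"
    by (simp add: power2_eq_square algebra_simps)
  finally have "(rho n)\<^sup>2 \<le> (m1 * sqrt (1 + 3 * rho n))\<^sup>2"
    using \<open>0 < rho n\<close> by (simp add: power_mult_distrib)
  then have "rho n \<le> m1 * sqrt (1 + 3 * rho n)"
    by (rule power2_le_imp_le) (use \<open>0 \<le> m1\<close> \<open>0 < rho n\<close> in simp)
  with \<open>0 < rho n\<close> show ?thesis
    by (simp add: m1_def pos_divide_le_eq)
qed simp

lemma abs_moment_remainder_le_Dr:
  "(\<integral>x. \<bar>Psi n (\<lambda>i. Y i x) - (\<Sum>i<n. Y i x)\<bar> \<partial>M)
    \<le> Dr (rho n) * (\<integral>x. \<bar>\<Sum>i<n. Y i x\<bar> \<partial>M)"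
proof (cases "rho n = 0")
  case True
  then show ?thesis
    using abs_moment_remainder by (simp add: Dr_def)
next
  case False
  with rho_nonneg have "0 < rho n"
    by (simp add: order_less_le)
  have "(\<integral>x. \<bar>Psi n (\<lambda>i. Y i x) - (\<Sum>i<n. Y i x)\<bar> \<partial>M)
      \<le> Dr (rho n) * (rho n / sqrt (1 + 3 * rho n))"
    using abs_moment_remainder Dr_mult_eq[OF \<open>0 < rho n\<close>] by simp
  also have "\<dots> \<le> Dr (rho n) * (\<integral>x. \<bar>\<Sum>i<n. Y i x\<bar> \<partial>M)"
    using abs_moment_sum_lower_bound Dr_nonneg[OF rho_nonneg] by (rule mult_left_mono)
  finally show ?thesis .
qed

lemma abs_moment_Psi_bounds:
  "(1 - Dr (rho n)) * (\<integral>x. \<bar>\<Sum>i<n. Y i x\<bar> \<partial>M) \<le> (\<integral>x. \<bar>Psi n (\<lambda>i. Y i x)\<bar> \<partial>M)"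
  "(\<integral>x. \<bar>Psi n (\<lambda>i. Y i x)\<bar> \<partial>M) \<le> (1 + Dr (rho n)) * (\<integral>x. \<bar>\<Sum>i<n. Y i x\<bar> \<partial>M)"
proof -
  have int: "integrable M (\<lambda>x. Psi n (\<lambda>i. Y i x))" "integrable M (\<lambda>x. \<Sum>i<n. Y i x)"
    using measurable_Psi_Y measurable_sum_Y bounded_Psi_Y bounded_sum_Y
    by (auto intro: integrable_bounded_image)
  show "(1 - Dr (rho n)) * (\<integral>x. \<bar>\<Sum>i<n. Y i x\<bar> \<partial>M) \<le> (\<integral>x. \<bar>Psi n (\<lambda>i. Y i x)\<bar> \<partial>M)"
    using integral_abs_le_add_integral_abs_diff[OF int(2,1)] abs_moment_remainder_le_Dr
    by (simp add: abs_minus_commute algebra_simps)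
  show "(\<integral>x. \<bar>Psi n (\<lambda>i. Y i x)\<bar> \<partial>M) \<le> (1 + Dr (rho n)) * (\<integral>x. \<bar>\<Sum>i<n. Y i x\<bar> \<partial>M)"
    using integral_abs_le_add_integral_abs_diff[OF int] abs_moment_remainder_le_Dr
    by (simp add: algebra_simps)
qed

end

theorem lemma3:
  fixes M :: "'a measure" and Y :: "nat \<Rightarrow> 'a \<Rightarrow> real" and n :: nat
  assumes "prob_space M"
    and "prob_space.indep_vars M (\<lambda>_. borel) Y {..<n}"
    and "\<And>i. i < n \<Longrightarrow> Y i \<in> borel_measurable M"
    and "\<And>i x. i < n \<Longrightarrow> x \<in> space M \<Longrightarrow> -1 \<le> Y i x \<and> Y i x \<le> 1"
    and "\<And>i. i < n \<Longrightarrow> (\<integral>x. Y i x \<partial>M) = 0"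
  defines "\<rho> \<equiv> (\<Sum>i<n. \<integral>x. (Y i x)\<^sup>2 \<partial>M)"
    and "S \<equiv> (\<lambda>x. \<Sum>i<n. Y i x)"
    and "R \<equiv> (\<lambda>x. Psi n (\<lambda>i. Y i x) - (\<Sum>i<n. Y i x))"
  shows "(\<integral>x. (R x)\<^sup>2 \<partial>M) \<le> sinh \<rho> - \<rho>
         \<and> (\<integral>x. \<bar>R x\<bar> \<partial>M) \<le> sqrt (sinh \<rho> - \<rho>)
         \<and> (\<integral>x. \<bar>S x\<bar> \<partial>M) \<ge> \<rho> / sqrt (1 + 3 * \<rho>)
         \<and> mono_on {0..} Dr
         \<and> (1 - Dr \<rho>) * (\<integral>x. \<bar>S x\<bar> \<partial>M) \<le> (\<integral>x. \<bar>Psi n (\<lambda>i. Y i x)\<bar> \<partial>M)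
         \<and> (\<integral>x. \<bar>Psi n (\<lambda>i. Y i x)\<bar> \<partial>M) \<le> (1 + Dr \<rho>) * (\<integral>x. \<bar>S x\<bar> \<partial>M)"
proof -
  have "\<bar>Y i x\<bar> \<le> 1" if "i < n" "x \<in> space M" for i x
    using assms(4)[OF that] by (simp add: abs_le_iff)
  with assms(1,2,5) interpret centered_unit_indep M Y n
    by (simp add: centered_unit_indep_def centered_unit_indep_axioms_def)
  have "\<rho> = rho n"
    by (simp add: \<rho>_def rho_def)
  then show ?thesis
    unfolding S_def R_def
    using second_moment_remainder[of n] abs_moment_remainder abs_moment_sum_lower_bound
      mono_on_Dr abs_moment_Psi_bounds
    by simp
qed

end
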